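(* There exists an almost discrete Fréchet–Urysohn (Tychonoff) space $Z$ such that $Z\times Z$ is not a weakly Grothendieck space.
   Context: A space is almost discrete if it has exactly one non-isolated point. $C_p(X)$ is the space of continuous real-valued functions on $X$ with the pointwise convergence topology. A space $W$ is a $g$-space if every subset $A\subseteq W$ such that every infinite subset of $A$ has an accumulation point in $W$ has compact closure in $W$; $X$ is weakly Grothendieck if $C_p(X)$ is a $g$-space. *)

theory Defs
  imports "HOL-Analysis.Analysis"
begin

definition almost_discrete :: "'a topology \<Rightarrow> bool" where
  "almost_discrete X \<longleftrightarrow> (\<exists>!p. p \<in> topspace X \<and> \<not> openin X {p})"

definition frechet_urysohn :: "'a topology \<Rightarrow> bool" where
  "frechet_urysohn X \<longleftrightarrow>
     (\<forall>A x. A \<subseteq> topspace X \<and> x \<in> X closure_of A \<longrightarrow>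
        (\<exists>\<sigma>::nat \<Rightarrow> 'a. range \<sigma> \<subseteq> A \<and> limitin X \<sigma> x sequentially))"

definition tychonoff_space :: "'a topology \<Rightarrow> bool" where
  "tychonoff_space X \<longleftrightarrow> completely_regular_space X \<and> t1_space X"

text \<open>C_p(X): continuous real functions on X (extensional, i.e. undefined off topspace X)
  with the topology of pointwise convergence (subspace of the product R^X).\<close>
definition Cp :: "'a topology \<Rightarrow> ('a \<Rightarrow> real) topology" where
  "Cp X = subtopology (product_topology (\<lambda>_. euclideanreal) (topspace X))
            {f. continuous_map X euclideanreal f \<and> f \<in> extensional (topspace X)}"

definition g_space :: "'b topology \<Rightarrow> bool" where
  "g_space W \<longleftrightarrow>
     (\<forall>A. A \<subseteq> topspace W \<and> (\<forall>B. B \<subseteq> A \<and> infinite B \<longrightarrow> W derived_set_of B \<noteq> {})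
          \<longrightarrow> compactin W (W closure_of A))"

definition weakly_grothendieck :: "'a topology \<Rightarrow> bool" where
  "weakly_grothendieck X \<longleftrightarrow> g_space (Cp X)"

end

theory Submission
  imports Defs
begin

text \<open>
  \<open>Z\<close> is the sequential fan with spines indexed by \<open>\<nat> \<Rightarrow> \<nat>\<close>: an apex and points \<open>pt g m\<close>,
  where a neighbourhood of the apex contains, for some \<open>f\<close>, all \<open>pt g m\<close> with \<open>m > f g\<close>.
  It is almost discrete, zero-dimensional (hence Tychonoff) and Frechet-Urysohn, since a set
  accumulating at the apex meets some spine in infinitely many points.

  In \<open>X = Z \<times> Z\<close> the pairs \<open>(pt (\<lambda>_. i) (g i), pt g i)\<close> form a set \<open>S\<close> of isolated points with
  \<open>(apex, apex)\<close> in its closure, but a diagonal argument shows that no countable part of \<open>S\<close>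
  accumulates at \<open>(apex, apex)\<close>. So every countable subset of \<open>S\<close> is clopen while \<open>S\<close> is not
  closed. In \<open>C\<^sub>p(X)\<close> the indicators of finite subsets of \<open>S\<close> then form a set every infinite
  part of which accumulates (by compactness of \<open>{0,1}\<^sup>T\<close>, \<open>T\<close> countable) at a continuous
  indicator, whereas its closure in \<open>\<real>\<^sup>X\<close> contains the discontinuous indicator of \<open>S\<close>;
  hence its closure in \<open>C\<^sub>p(X)\<close> is not compact.
\<close>

lemma notin_prod_closure_ofI:
  assumes "openin X U" "openin Y V" "x \<in> U" "y \<in> V" "(U \<times> V) \<inter> S = {}"
  shows "(x, y) \<notin> prod_topology X Y closure_of S"
proof -
  have "openin (prod_topology X Y) (U \<times> V)"
    using assms(1,2) by (simp add: openin_prod_Times_iff)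
  then have "(U \<times> V) \<inter> prod_topology X Y closure_of S = {}"
    using assms(5) by (simp add: openin_Int_closure_of_eq_empty)
  with assms(3,4) show ?thesis
    by blast
qed

section \<open>Spaces whose \<open>C\<^sub>p\<close> is not a g-space\<close>

lemma continuous_map_indicator_clopen:
  assumes "openin X U" "closedin X U"
  shows "continuous_map X euclideanreal (indicator U :: 'a \<Rightarrow> real)"
proof -
  have "openin X {x \<in> topspace X. indicator U x \<in> V}" for V :: "real set"
  proof -
    have "{x \<in> topspace X. (indicator U x :: real) \<in> V} =
          (if 1 \<in> V then U else {}) \<union> (if 0 \<in> V then topspace X - U else {})"
      using openin_subset[OF assms(1)] by (auto simp: indicator_def)
    then show ?thesis
      using assms by (auto simp: closedin_def)
  qed
  then show ?thesis
    by (simp add: continuous_map_def)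
qed

lemma closedin_if_continuous_map_indicator:
  assumes "continuous_map X euclideanreal (indicator S :: 'a \<Rightarrow> real)" "S \<subseteq> topspace X"
  shows "closedin X S"
proof -
  have "closedin X {x \<in> topspace X. (indicator S x :: real) \<in> {1}}"
    using assms(1) by (rule closedin_continuous_map_preimage) simp
  moreover have "{x \<in> topspace X. (indicator S x :: real) \<in> {1}} = S"
    using assms(2) by (auto simp: indicator_def)
  ultimately show ?thesis by simp
qed

definition indicator_on :: "'a set \<Rightarrow> 'a set \<Rightarrow> 'a \<Rightarrow> real" where
  "indicator_on I F = restrict (indicator F) I"

lemma indicator_on_in_topspace_Cp:
  assumes "openin X U" "closedin X U"
  shows "indicator_on (topspace X) U \<in> topspace (Cp X)"
proof -
  have "continuous_map X euclideanreal (indicator_on (topspace X) U)"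
    using continuous_map_indicator_clopen[OF assms]
    by (rule continuous_map_eq) (simp add: indicator_on_def)
  then show ?thesis
    by (simp add: Cp_def indicator_on_def)
qed

lemma continuous_map_indicator_on_imp_closedin:
  assumes "indicator_on (topspace X) S \<in> topspace (Cp X)" "S \<subseteq> topspace X"
  shows "closedin X S"
proof -
  have "continuous_map X euclideanreal (indicator_on (topspace X) S)"
    using assms(1) by (simp add: Cp_def)
  then have "continuous_map X euclideanreal (indicator S :: 'a \<Rightarrow> real)"
    by (rule continuous_map_eq) (simp add: indicator_on_def)
  then show ?thesis
    using assms(2) by (rule closedin_if_continuous_map_indicator)
qed

lemma indicator_on_in_closure_of_finite_subsets:
  "indicator_on I T \<in> product_topology (\<lambda>_. euclideanreal) I closure_of
     (indicator_on I ` {F. finite F \<and> F \<subseteq> T})"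
  unfolding in_closure_of
proof (intro conjI allI impI)
  show "indicator_on I T \<in> topspace (product_topology (\<lambda>_. euclideanreal) I)"
    by (simp add: indicator_on_def)
  fix W assume W: "indicator_on I T \<in> W \<and> openin (product_topology (\<lambda>_. euclideanreal) I) W"
  then obtain V where V: "indicator_on I T \<in> (\<Pi>\<^sub>E i\<in>I. V i)" "finite {i. V i \<noteq> UNIV}"
      "(\<Pi>\<^sub>E i\<in>I. V i) \<subseteq> W"
    using product_topology_open_contains_basis[of "\<lambda>_. euclideanreal" I W "indicator_on I T"] W
    by auto
  define F where "F = {i. V i \<noteq> UNIV} \<inter> T"
  have "indicator_on I F i \<in> V i" if "i \<in> I" for i
  proof (cases "V i = UNIV")
    case False
    then have "indicator_on I F i = indicator_on I T i"
      by (simp add: F_def indicator_on_def indicator_def)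
    then show ?thesis
      using V(1) that by (simp add: PiE_iff)
  qed simp
  then have "indicator_on I F \<in> W"
    using V(3) by (auto simp: PiE_iff indicator_on_def)
  moreover have "finite F" "F \<subseteq> T"
    using V(2) by (auto simp: F_def)
  ultimately show "\<exists>y. y \<in> indicator_on I ` {F. finite F \<and> F \<subseteq> T} \<and> y \<in> W"
    by blast
qed

lemma indicators_of_finite_subsets_accumulate:
  assumes B: "B \<subseteq> indicator_on I ` {F. finite F \<and> F \<subseteq> T}" "infinite B"
  obtains E where "countable E" "E \<subseteq> T"
    "indicator_on I E \<in> product_topology (\<lambda>_. euclideanreal) I derived_set_of B"
proof -
  let ?P = "product_topology (\<lambda>_. euclideanreal) I"
  obtain C where C: "C \<subseteq> B" "countable C" "infinite C"
    using infinite_countable_subset'[OF B(2)] by blast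
  then obtain \<F> where \<F>: "countable \<F>" "\<F> \<subseteq> {F. finite F \<and> F \<subseteq> T}" "C = indicator_on I ` \<F>"
    using B(1) countable_subset_image[of C "indicator_on I"] by (metis subset_trans)
  define E where "E = (\<Union>F\<in>\<F>. F)"
  have E: "countable E" "E \<subseteq> T"
    using \<F>(1,2) unfolding E_def by (blast intro: countable_finite)+
  define Q where "Q = (\<Pi>\<^sub>E i\<in>I. if i \<in> E then {0, 1::real} else {0})"
  have "compactin ?P Q"
    unfolding Q_def compactin_PiE by (auto intro: finite_imp_compactin)
  moreover have "C \<subseteq> Q"
    using \<F>(3) by (auto simp: Q_def E_def indicator_on_def indicator_def)
  ultimately obtain f where f: "f \<in> Q" "f \<in> ?P derived_set_of C"
    using C(3) compactin_imp_Bolzano_Weierstrass by blast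
  define E' where "E' = {i \<in> E. f i = 1}"
  have "f = indicator_on I E'"
  proof
    fix i show "f i = indicator_on I E' i"
      using f(1) by (cases "i \<in> I"; cases "i \<in> E")
        (auto simp: E'_def Q_def indicator_on_def indicator_def PiE_iff extensional_def)
  qed
  moreover have "f \<in> ?P derived_set_of B"
    using f(2) derived_set_of_mono[OF C(1)] by blast
  moreover have "countable E'" "E' \<subseteq> T"
    using E countable_subset[of E' E] by (auto simp: E'_def)
  ultimately show thesis
    using that by blast
qed

theorem not_weakly_grothendieck_if_countable_subsets_clopen:
  assumes S: "S \<subseteq> topspace X" "\<not> closedin X S"
    and clopen: "\<And>T. T \<subseteq> S \<Longrightarrow> countable T \<Longrightarrow> openin X T \<and> closedin X T"
  shows "\<not> weakly_grothendieck X"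
proof
  let ?P = "product_topology (\<lambda>_. euclideanreal) (topspace X)"
  let ?A = "indicator_on (topspace X) ` {F. finite F \<and> F \<subseteq> S}"
  define C where "C = {f. continuous_map X euclideanreal f \<and> f \<in> extensional (topspace X)}"
  have Cp: "Cp X = subtopology ?P C" and topspace_Cp: "topspace (Cp X) = topspace ?P \<inter> C"
    by (simp_all add: Cp_def C_def)
  have countable_in_Cp: "indicator_on (topspace X) T \<in> topspace (Cp X)"
    if "T \<subseteq> S" "countable T" for T
    using clopen[OF that] by (blast intro: indicator_on_in_topspace_Cp)
  have A: "?A \<subseteq> topspace (Cp X)"
  proof (rule image_subsetI)
    fix F assume "F \<in> {F. finite F \<and> F \<subseteq> S}"
    then show "indicator_on (topspace X) F \<in> topspace (Cp X)"
      by (simp add: countable_in_Cp countable_finite)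
  qed
  have "Cp X derived_set_of B \<noteq> {}" if B: "B \<subseteq> ?A" "infinite B" for B
  proof -
    obtain E where E: "countable E" "E \<subseteq> S" "indicator_on (topspace X) E \<in> ?P derived_set_of B"
      using indicators_of_finite_subsets_accumulate[OF B] .
    moreover have "C \<inter> B = B"
      using A B(1) topspace_Cp by blast
    ultimately have "indicator_on (topspace X) E \<in> Cp X derived_set_of B"
      using countable_in_Cp[OF E(2,1)] topspace_Cp by (simp add: Cp derived_set_of_subtopology)
    then show ?thesis by blast
  qed
  moreover assume "weakly_grothendieck X"
  ultimately have "compactin (Cp X) (Cp X closure_of ?A)"
    using A by (auto simp: weakly_grothendieck_def g_space_def)
  then have "compactin ?P (Cp X closure_of ?A)"
    by (simp add: Cp compactin_subtopology)
  then have "closedin ?P (Cp X closure_of ?A)"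
    by (simp add: compactin_imp_closedin Hausdorff_space_product_topology)
  then have "?P closure_of ?A \<subseteq> Cp X closure_of ?A"
    by (rule closure_of_minimal[OF closure_of_subset[OF A]])
  then have "indicator_on (topspace X) S \<in> topspace (Cp X)"
    using indicator_on_in_closure_of_finite_subsets[of "topspace X" S]
      closure_of_subset_topspace[of "Cp X" ?A] by blast
  then have "closedin X S"
    using S(1) by (rule continuous_map_indicator_on_imp_closedin)
  with S(2) show False ..
qed

section \<open>The sequential fan with spines indexed by \<open>\<nat> \<Rightarrow> \<nat>\<close>\<close>

locale fan_encoding =
  fixes pt :: "(nat \<Rightarrow> nat) \<Rightarrow> nat \<Rightarrow> 'a" and apex :: 'a
  assumes pt_eq_iff [simp]: "pt g m = pt g' m' \<longleftrightarrow> g = g' \<and> m = m'"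
    and pt_neq_apex [simp]: "pt g m \<noteq> apex"
begin

lemma apex_neq_pt [simp]: "apex \<noteq> pt g m"
  by (metis pt_neq_apex)

definition fan_carrier :: "'a set" where
  "fan_carrier = insert apex (range (case_prod pt))"

definition fan_nbhd :: "((nat \<Rightarrow> nat) \<Rightarrow> nat) \<Rightarrow> 'a set" where
  "fan_nbhd f = insert apex {pt g m |g m. f g < m}"

definition fan :: "'a topology" where
  "fan = topology (\<lambda>U. U \<subseteq> fan_carrier \<and> (apex \<in> U \<longrightarrow> (\<exists>f. fan_nbhd f \<subseteq> U)))"

lemma apex_in_fan_nbhd [simp]: "apex \<in> fan_nbhd f"
  by (simp add: fan_nbhd_def)

lemma pt_in_fan_nbhd [simp]: "pt g m \<in> fan_nbhd f \<longleftrightarrow> f g < m"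
  by (auto simp: fan_nbhd_def)

lemma fan_nbhd_subset: "fan_nbhd f \<subseteq> fan_carrier"
  by (auto simp: fan_nbhd_def fan_carrier_def)

lemma fan_nbhd_Int: "fan_nbhd (\<lambda>g. max (f g) (h g)) \<subseteq> fan_nbhd f \<inter> fan_nbhd h"
  by (auto simp: fan_nbhd_def)

lemma openin_fan:
  "openin fan U \<longleftrightarrow> U \<subseteq> fan_carrier \<and> (apex \<in> U \<longrightarrow> (\<exists>f. fan_nbhd f \<subseteq> U))"
proof -
  let ?L = "\<lambda>U. U \<subseteq> fan_carrier \<and> (apex \<in> U \<longrightarrow> (\<exists>f. fan_nbhd f \<subseteq> U))"
  have Int: "?L (S \<inter> T)" if S: "?L S" and T: "?L T" for S T
  proof -
    have "\<exists>f. fan_nbhd f \<subseteq> S \<inter> T" if apex: "apex \<in> S \<inter> T"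
    proof -
      obtain f h where "fan_nbhd f \<subseteq> S" "fan_nbhd h \<subseteq> T"
        using S T apex by blast
      then show ?thesis
        using fan_nbhd_Int[of f h] by blast
    qed
    with S show ?thesis
      by blast
  qed
  have Union: "?L (\<Union>\<K>)" if opens: "\<forall>K\<in>\<K>. ?L K" for \<K>
  proof -
    have "\<exists>f. fan_nbhd f \<subseteq> \<Union>\<K>" if apex: "apex \<in> \<Union>\<K>"
    proof -
      obtain K where "K \<in> \<K>" "apex \<in> K"
        using apex by blast
      moreover obtain f where "fan_nbhd f \<subseteq> K"
        using \<open>K \<in> \<K>\<close> \<open>apex \<in> K\<close> opens by blast
      ultimately show ?thesis
        by blast
    qed
    with opens show ?thesis
      by blast
  qed
  have "istopology ?L"
    unfolding istopology_def using Int Union by blast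
  then show ?thesis
    by (simp add: fan_def)
qed

lemma topspace_fan [simp]: "topspace fan = fan_carrier"
proof (rule subset_antisym)
  show "topspace fan \<subseteq> fan_carrier"
    using openin_topspace[of fan] unfolding openin_fan by blast
  have "openin fan fan_carrier"
    using fan_nbhd_subset by (auto simp: openin_fan)
  then show "fan_carrier \<subseteq> topspace fan"
    by (rule openin_subset)
qed

lemma apex_in_fan_carrier [simp]: "apex \<in> fan_carrier"
  and pt_in_fan_carrier [simp]: "pt g m \<in> fan_carrier"
  by (auto simp: fan_carrier_def)

lemma fan_carrier_cases:
  assumes "x \<in> fan_carrier"
  obtains "x = apex" | g m where "x = pt g m"
  using assms by (auto simp: fan_carrier_def)

lemma openin_fan_nbhd: "openin fan (fan_nbhd f)"
  using fan_nbhd_subset by (auto simp: openin_fan)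

lemma closedin_fan_nbhd: "closedin fan (fan_nbhd f)"
proof -
  have "openin fan (fan_carrier - fan_nbhd f)"
    unfolding openin_fan using apex_in_fan_nbhd by blast
  then show ?thesis
    using fan_nbhd_subset by (simp add: closedin_def)
qed

lemma openin_fan_singleton: "x \<noteq> apex \<Longrightarrow> x \<in> fan_carrier \<Longrightarrow> openin fan {x}"
  by (simp add: openin_fan)

lemma openin_fan_imp_fan_nbhd: "openin fan U \<Longrightarrow> apex \<in> U \<Longrightarrow> \<exists>f. fan_nbhd f \<subseteq> U"
  by (simp add: openin_fan)

lemma almost_discrete_fan: "almost_discrete fan"
  unfolding almost_discrete_def
proof (rule ex1I[of _ apex])
  have "pt (\<lambda>_. 0) (Suc (f (\<lambda>_. 0))) \<in> fan_nbhd f - {apex}" for f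
    by simp
  then have "\<not> fan_nbhd f \<subseteq> {apex}" for f
    by blast
  then show "apex \<in> topspace fan \<and> \<not> openin fan {apex}"
    by (simp add: openin_fan)
next
  fix y assume "y \<in> topspace fan \<and> \<not> openin fan {y}"
  then show "y = apex"
    using openin_fan_singleton[of y] by (cases "y = apex") simp_all
qed

lemma t1_space_fan: "t1_space fan"
  unfolding t1_space_def topspace_fan
proof (intro ballI impI)
  fix x y assume xy: "x \<in> fan_carrier" "y \<in> fan_carrier" "x \<noteq> y"
  show "\<exists>U. openin fan U \<and> x \<in> U \<and> y \<notin> U"
  proof (cases "x = apex")
    case True
    from xy(2) obtain g m where "y = pt g m"
      using True xy(3) by (cases rule: fan_carrier_cases) auto
    then show ?thesis
      using True openin_fan_nbhd[of "\<lambda>_. m"] by auto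
  next
    case False
    then have "openin fan {x}"
      using xy(1) by (rule openin_fan_singleton)
    with xy(3) show ?thesis
      by blast
  qed
qed

lemma fan_dim_le_0: "fan dim_le 0"
  unfolding dimension_le_0_neighbourhood_base_of_clopen
proof (subst open_neighbourhood_base_of, blast, intro allI impI)
  fix W x assume W: "openin fan W \<and> x \<in> W"
  show "\<exists>U. (closedin fan U \<and> openin fan U) \<and> x \<in> U \<and> U \<subseteq> W"
  proof (cases "x = apex")
    case True
    then obtain f where "fan_nbhd f \<subseteq> W"
      using W openin_fan_imp_fan_nbhd by blast
    then show ?thesis
      using True openin_fan_nbhd closedin_fan_nbhd apex_in_fan_nbhd by blast
  next
    case False
    have "x \<in> fan_carrier"
      using W openin_subset by fastforce
    then have "openin fan {x}" "closedin fan {x}"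
      using False openin_fan_singleton t1_space_fan by (auto simp: t1_space_closedin_singleton)
    then show ?thesis
      using W by blast
  qed
qed

lemma tychonoff_space_fan: "tychonoff_space fan"
  by (simp add: tychonoff_space_def t1_space_fan fan_dim_le_0 zero_dimensional_imp_completely_regular_space)

lemma apex_in_closure_imp_infinite_spine:
  assumes "apex \<in> fan closure_of A" "apex \<notin> A"
  shows "\<exists>g. infinite {m. pt g m \<in> A}"
proof (rule ccontr)
  assume "\<nexists>g. infinite {m. pt g m \<in> A}"
  then have fin: "finite {m. pt g m \<in> A}" for g
    by blast
  define f where "f g = Max {m. pt g m \<in> A}" for g
  obtain y where y: "y \<in> A" "y \<in> fan_nbhd f"
    using assms(1) openin_fan_nbhd[of f] apex_in_fan_nbhd[of f] unfolding in_closure_of by blast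
  then obtain g m where y_eq: "y = pt g m"
    using assms(2) by (auto simp: fan_nbhd_def)
  have "m \<le> f g"
    unfolding f_def using fin[of g] y(1) y_eq by (intro Max_ge) auto
  moreover have "f g < m"
    using y(2) y_eq by simp
  ultimately show False
    by simp
qed

lemma limitin_fan_spine:
  assumes "\<And>n. n \<le> r n"
  shows "limitin fan (\<lambda>n. pt g (r n)) apex sequentially"
  unfolding limitin_def
proof (intro conjI allI impI)
  fix U assume "openin fan U \<and> apex \<in> U"
  then obtain f where f: "fan_nbhd f \<subseteq> U"
    using openin_fan_imp_fan_nbhd by blast
  have "pt g (r n) \<in> U" if "Suc (f g) \<le> n" for n
    using f assms[of n] that by auto
  then show "\<forall>\<^sub>F n in sequentially. pt g (r n) \<in> U"
    unfolding eventually_sequentially by blast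
qed simp

lemma frechet_urysohn_fan: "frechet_urysohn fan"
  unfolding frechet_urysohn_def
proof (intro allI impI)
  fix A x assume A: "A \<subseteq> topspace fan \<and> x \<in> fan closure_of A"
  show "\<exists>\<sigma>. range \<sigma> \<subseteq> A \<and> limitin fan \<sigma> x sequentially"
  proof (cases "x \<in> A")
    case True
    then show ?thesis
      using A by (intro exI[of _ "\<lambda>_. x"]) auto
  next
    case False
    have "x \<in> fan_carrier"
      using A closure_of_subset_topspace by fastforce
    have "x = apex"
    proof (rule ccontr)
      assume "x \<noteq> apex"
      then have "openin fan {x}"
        using \<open>x \<in> fan_carrier\<close> by (rule openin_fan_singleton)
      with A have "\<exists>y. y \<in> A \<and> y \<in> {x}"
        unfolding in_closure_of by blast
      with False show False
        by blast
    qed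
    then obtain g where g: "infinite {m. pt g m \<in> A}"
      using A False apex_in_closure_imp_infinite_spine by blast
    show ?thesis
    proof (intro exI conjI)
      show "range (\<lambda>n. pt g (enumerate {m. pt g m \<in> A} n)) \<subseteq> A"
        using enumerate_in_set[OF g] by auto
      show "limitin fan (\<lambda>n. pt g (enumerate {m. pt g m \<in> A} n)) x sequentially"
        using \<open>x = apex\<close> le_enumerate[OF g] by (simp add: limitin_fan_spine)
    qed
  qed
qed

section \<open>The square of the fan\<close>

definition fan_pair :: "nat \<Rightarrow> (nat \<Rightarrow> nat) \<Rightarrow> 'a \<times> 'a" where
  "fan_pair i g = (pt (\<lambda>_. i) (g i), pt g i)"

definition fan_pairs :: "('a \<times> 'a) set" where
  "fan_pairs = range (case_prod fan_pair)"

lemma openin_singleton_fan_pair: "openin (prod_topology fan fan) {fan_pair i g}"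
  using openin_prod_Times_iff[of fan fan "{pt (\<lambda>_. i) (g i)}" "{pt g i}"]
  by (simp add: fan_pair_def openin_fan_singleton)

lemma fan_pairs_subset: "fan_pairs \<subseteq> topspace (prod_topology fan fan)"
  by (auto simp: fan_pairs_def fan_pair_def)

lemma notin_closure_of_fan_pairs:
  assumes "x \<in> fan_carrier" "y \<in> fan_carrier" "(x, y) \<notin> fan_pairs" "(x, y) \<noteq> (apex, apex)"
  shows "(x, y) \<notin> prod_topology fan fan closure_of fan_pairs"
proof (cases "x = apex")
  case True
  from assms(2) obtain g m where y: "y = pt g m"
    using True assms(4) by (cases rule: fan_carrier_cases) auto
  show ?thesis
  proof (rule notin_prod_closure_ofI)
    show "openin fan (fan_nbhd (\<lambda>_. g m))" "openin fan {y}"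
      by (simp_all add: y openin_fan_nbhd openin_fan_singleton)
    show "(fan_nbhd (\<lambda>_. g m) \<times> {y}) \<inter> fan_pairs = {}"
      by (auto simp: y fan_pairs_def fan_pair_def)
  qed (simp_all add: True)
next
  case False
  from assms(1) obtain a b where x: "x = pt a b"
    using False by (cases rule: fan_carrier_cases) auto
  define V where "V = (if y = apex then fan_nbhd (\<lambda>_. a 0) else {y})"
  show ?thesis
  proof (rule notin_prod_closure_ofI)
    show "openin fan {x}" "openin fan V"
      using assms(1,2) False by (simp_all add: V_def openin_fan_nbhd openin_fan_singleton)
    show "({x} \<times> V) \<inter> fan_pairs = {}"
      using assms(3) by (auto simp: V_def x fan_pairs_def fan_pair_def)
  qed (simp_all add: V_def)
qed

lemma closure_of_fan_pairs_subset:
  "prod_topology fan fan closure_of fan_pairs \<subseteq> insert (apex, apex) fan_pairs"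
proof
  fix z assume z: "z \<in> prod_topology fan fan closure_of fan_pairs"
  obtain x y where z_eq: "z = (x, y)"
    by fastforce
  have "x \<in> fan_carrier" "y \<in> fan_carrier"
    using closure_of_subset_topspace[of "prod_topology fan fan" fan_pairs] z z_eq by auto
  then show "z \<in> insert (apex, apex) fan_pairs"
    using notin_closure_of_fan_pairs z z_eq by blast
qed

lemma apex_pair_in_closure_of_fan_pairs:
  "(apex, apex) \<in> prod_topology fan fan closure_of fan_pairs"
  unfolding in_closure_of
proof (intro conjI allI impI)
  fix W assume W: "(apex, apex) \<in> W \<and> openin (prod_topology fan fan) W"
  then obtain U V where UV: "openin fan U" "openin fan V" "apex \<in> U" "apex \<in> V" "U \<times> V \<subseteq> W"
    using openin_prod_topology_alt[of fan fan W] by meson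
  obtain h f where hf: "fan_nbhd h \<subseteq> U" "fan_nbhd f \<subseteq> V"
    using UV(1-4) openin_fan_imp_fan_nbhd by meson
  define g where "g i = Suc (h (\<lambda>_. i))" for i
  define i where "i = Suc (f g)"
  have "pt (\<lambda>_. i) (g i) \<in> U" "pt g i \<in> V"
    using hf by (auto simp: g_def i_def)
  then have "fan_pair i g \<in> W"
    using UV(5) by (auto simp: fan_pair_def)
  then show "\<exists>z. z \<in> fan_pairs \<and> z \<in> W"
    by (auto simp: fan_pairs_def)
qed simp

text \<open>The spines occurring in \<open>A\<close> are enumerated as \<open>gs 0, gs 1, \<dots>\<close>. A pair \<open>fan_pair i g\<close> in
  \<open>fan_nbhd h \<times> fan_nbhd (inv gs)\<close> would need \<open>inv gs g < i\<close>, hence \<open>g i \<le> h (\<lambda>_. i)\<close> by the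
  choice of \<open>h\<close>, and at the same time \<open>h (\<lambda>_. i) < g i\<close>.\<close>
lemma apex_pair_notin_closure_of_countable:
  assumes "countable A"
  shows "(apex, apex) \<notin> prod_topology fan fan closure_of (case_prod fan_pair ` A)"
proof -
  define gs where "gs = from_nat_into (snd ` A)"
  have gs: "snd ` A \<subseteq> range gs"
    using assms by (simp add: gs_def subset_range_from_nat_into)
  define h where "h a = Max ((\<lambda>k. gs k (a 0)) ` {..a 0})" for a :: "nat \<Rightarrow> nat"
  have disj: "fan_pair i g \<notin> fan_nbhd h \<times> fan_nbhd (inv gs)" if "(i, g) \<in> A" for i g
  proof
    assume "fan_pair i g \<in> fan_nbhd h \<times> fan_nbhd (inv gs)"
    then have "h (\<lambda>_. i) < g i" "inv gs g < i"
      by (auto simp: fan_pair_def)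
    moreover have "gs (inv gs g) = g"
      using gs that by (force intro: f_inv_into_f)
    moreover have "gs (inv gs g) i \<le> h (\<lambda>_. i)" if "inv gs g \<le> i"
      unfolding h_def using that by (intro Max_ge) auto
    ultimately show False
      by simp
  qed
  have "z \<notin> fan_nbhd h \<times> fan_nbhd (inv gs)" if "z \<in> case_prod fan_pair ` A" for z
  proof -
    from that obtain i g where "(i, g) \<in> A" "z = fan_pair i g"
      by auto
    with disj[of i g] show ?thesis
      by simp
  qed
  then have "(fan_nbhd h \<times> fan_nbhd (inv gs)) \<inter> case_prod fan_pair ` A = {}"
    by blast
  then show ?thesis
    by (intro notin_prod_closure_ofI) (auto intro: openin_fan_nbhd)
qed

lemma countable_subset_fan_pairs_clopen:
  assumes "T \<subseteq> fan_pairs" "countable T"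
  shows "openin (prod_topology fan fan) T \<and> closedin (prod_topology fan fan) T"
proof
  obtain A where A: "countable A" "T = case_prod fan_pair ` A"
    using assms countable_subset_image[of T "case_prod fan_pair" UNIV]
    by (auto simp: fan_pairs_def)
  have isolated: "openin (prod_topology fan fan) {z}" if "z \<in> fan_pairs" for z
    using that openin_singleton_fan_pair by (auto simp: fan_pairs_def)
  show "openin (prod_topology fan fan) T"
  proof (subst openin_subopen, intro ballI)
    fix z assume "z \<in> T"
    then show "\<exists>U. openin (prod_topology fan fan) U \<and> z \<in> U \<and> U \<subseteq> T"
      using isolated[of z] assms(1) by blast
  qed
  have "prod_topology fan fan closure_of T \<subseteq> T"
  proof
    fix z assume z: "z \<in> prod_topology fan fan closure_of T"
    then have "z \<in> insert (apex, apex) fan_pairs"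
      using closure_of_fan_pairs_subset closure_of_mono[OF assms(1)] by blast
    moreover have "z \<noteq> (apex, apex)"
      using z A apex_pair_notin_closure_of_countable by blast
    ultimately have "openin (prod_topology fan fan) {z}"
      using isolated by blast
    with z show "z \<in> T"
      unfolding in_closure_of by blast
  qed
  moreover have "T \<subseteq> topspace (prod_topology fan fan)"
    using assms(1) fan_pairs_subset by (rule subset_trans)
  ultimately show "closedin (prod_topology fan fan) T"
    using closure_of_subset_eq by blast
qed

lemma not_weakly_grothendieck_fan_square: "\<not> weakly_grothendieck (prod_topology fan fan)"
proof (rule not_weakly_grothendieck_if_countable_subsets_clopen)
  have "(apex, apex) \<notin> fan_pairs"
    by (auto simp: fan_pairs_def fan_pair_def)
  then show "\<not> closedin (prod_topology fan fan) fan_pairs"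
    using apex_pair_in_closure_of_fan_pairs by (auto simp flip: closure_of_eq)
qed (use fan_pairs_subset countable_subset_fan_pairs_clopen in simp_all)

end

section \<open>A fan of sets of reals\<close>

text \<open>The spine point \<open>(g, m)\<close> is coded as the graph of \<open>case_nat m g\<close> inside \<open>\<nat> \<subseteq> \<real>\<close>;
  the apex is \<open>{}\<close>.\<close>

definition graph_code :: "(nat \<Rightarrow> nat) \<Rightarrow> real set" where
  "graph_code h = range (\<lambda>n. real (prod_encode (n, h n)))"

lemma graph_code_inject: "graph_code h = graph_code h' \<Longrightarrow> h = h'"
proof (rule ext)
  fix n assume eq: "graph_code h = graph_code h'"
  have "real (prod_encode (n, h n)) \<in> graph_code h"
    by (simp add: graph_code_def)
  then have "real (prod_encode (n, h n)) \<in> graph_code h'"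
    by (simp only: eq)
  then obtain n' where "prod_encode (n, h n) = prod_encode (n', h' n')"
    unfolding graph_code_def of_nat_eq_iff by auto
  then show "h n = h' n"
    by (auto simp: prod_encode_eq)
qed

lemma case_nat_inject:
  assumes "case_nat m g = case_nat m' g'"
  shows "m = m' \<and> g = g'"
proof
  show "m = m'"
    using fun_cong[OF assms, of 0] by simp
  show "g = g'"
  proof
    fix n show "g n = g' n"
      using fun_cong[OF assms, of "Suc n"] by simp
  qed
qed

interpretation real_fan: fan_encoding "\<lambda>g m. graph_code (case_nat m g)" "{}"
proof
  show "graph_code (case_nat m g) = graph_code (case_nat m' g') \<longleftrightarrow> g = g' \<and> m = m'"
    for g g' m m'
    by (auto dest: graph_code_inject case_nat_inject)
  show "graph_code (case_nat m g) \<noteq> {}" for g m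
    by (simp add: graph_code_def)
qed

theorem mainTheorem7:
  shows "\<exists>Z :: real set topology.
           almost_discrete Z \<and> frechet_urysohn Z \<and> tychonoff_space Z \<and>
           \<not> weakly_grothendieck (prod_topology Z Z)"
  using real_fan.almost_discrete_fan real_fan.frechet_urysohn_fan real_fan.tychonoff_space_fan
    real_fan.not_weakly_grothendieck_fan_square by (intro exI[of _ real_fan.fan] conjI)

end
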